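(* Fix an sBS $k$ and suppose that in slots $0,1,\dots,t-1$ each file is recommended independently with probability $q=r/F$ and cached independently with probability $p=c/F$, and that $\hat{\mathbf P}_k^{(t)}$ is the point estimate. Let $(\mathbf u^*_{o,t},\mathbf v^*_{o,t})\in\arg\max_{(\mathbf u,\mathbf v)\in\mathcal C_{c,r}}\mathbf u^T\hat{\mathbf P}_k^{(t)}\mathbf v$. Then for any $\epsilon>0$ and $\delta>0$, with probability at least $1-\delta$, $$(\mathbf u^*_{o,t})^T\mathbf P_k\mathbf v^*_{o,t}\ge\sup_{(\mathbf u,\mathbf v)\in\mathcal C_{c,r}}\mathbf u^T\mathbf P_k\mathbf v-\epsilon,$$ provided $$t\ge\frac{1}{q\left(1-\exp\{-\frac{N\epsilon^2}{8\kappa^2F^2c^2r^2}\}\right)}\log\frac{2|\mathcal N_\epsilon|F^2}{\delta}.$$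
   Context: Setting: a catalog of $F$ files $\{1,\dots,F\}$; time is slotted; in every slot each of $N$ users of a small base station (sBS) requests a file. For sBS $k$, the probability transition matrix (PTM) $\mathbf P_k\in[0,1]^{F\times F}$ has entries $(\mathbf P_k)_{ij}=p_{ij,k}$, the probability that a user at sBS $k$ requests file $i$ given that file $j$ is recommended; $\mathbf P_k$ does not change over time. For a cache size $c>0$ and a recommendation budget $r>0$, the strategy set is $\mathcal C_{c,r}=\{(\mathbf u,\mathbf v)\in[0,1]^F\times[0,1]^F:\mathbf u^T\mathbf 1\le c,\ \mathbf v^T\mathbf 1\le r\}$; the average cache hit of $(\mathbf u,\mathbf v)$ at sBS $k$ is $\mathbf u^T\mathbf P_k\mathbf v$. $d_{ik}^{(s)}$ is the number of requests for file $i$ at sBS $k$ in slot $s$, and $v_{jk}^{s}\in\{0,1\}$ indicates whether file $j$ was recommended at sBS $k$ in slot $s$. Statistical assumption: conditionally on the recommendation indicators, for each slot $s$ with $v_{jk}^{s-1}=1$, $d_{ik}^{(s)}$ is a sum of $N$ i.i.d. Bernoulli$(p_{ij,k})$ variables, independent across such slots. Point estimator: $\hat p_{ij,k}^{(t)}=\frac{\sum_{s=0}^{t-1}d_{ik}^{(s)}v_{jk}^{s-1}}{N\sum_{s=0}^{t-1}v_{jk}^{s-1}}$, and $\hat{\mathbf P}_k^{(t)}$ is the matrix of these entries. An $\epsilon$-cover of $\mathcal C_{c,r}$ is a finite set $\mathcal N_\epsilon$ of pairs $(\mathbf x,\mathbf y)$ such that for every $(\mathbf u,\mathbf v)\in\mathcal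 C_{c,r}$ some $(\mathbf x,\mathbf y)\in\mathcal N_\epsilon$ satisfies $\|\mathbf u-\mathbf x\|_2\le\epsilon/8$ and $\|\mathbf v-\mathbf y\|_2\le\epsilon/8$; $|\mathcal N_\epsilon|$ is its cardinality. $\kappa>0$ is a fixed constant such that $|\mathbf x^T A\mathbf y|\le\kappa\|\mathbf x\|_1\|\mathbf y\|_1\|A\|_F$ for all vectors $\mathbf x,\mathbf y$ and matrices $A$. *)

theory Defs
  imports "HOL-Probability.Probability"
begin

text \<open>Files are indexed by 1..F; vectors are functions nat => real (only the
values on 1..F matter); a PTM is a function nat => nat => real with
P i j = probability of requesting file i given file j is recommended.\<close>

definition bilin :: "nat \<Rightarrow> (nat \<Rightarrow> real) \<Rightarrow> (nat \<Rightarrow> nat \<Rightarrow> real) \<Rightarrow> (nat \<Rightarrow> real) \<Rightarrow> real" where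
  "bilin F u A v = (\<Sum>i\<in>{1..F}. \<Sum>j\<in>{1..F}. u i * A i j * v j)"

definition strat_set :: "nat \<Rightarrow> real \<Rightarrow> real \<Rightarrow> ((nat \<Rightarrow> real) \<times> (nat \<Rightarrow> real)) set" where
  "strat_set F c r = {(u, v). (\<forall>i\<in>{1..F}. 0 \<le> u i \<and> u i \<le> 1) \<and> (\<forall>i\<in>{1..F}. 0 \<le> v i \<and> v i \<le> 1)
      \<and> (\<Sum>i\<in>{1..F}. u i) \<le> c \<and> (\<Sum>i\<in>{1..F}. v i) \<le> r}"

definition l2dist :: "nat \<Rightarrow> (nat \<Rightarrow> real) \<Rightarrow> (nat \<Rightarrow> real) \<Rightarrow> real" where
  "l2dist F x y = sqrt (\<Sum>i\<in>{1..F}. (x i - y i)\<^sup>2)"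

definition l1norm :: "nat \<Rightarrow> (nat \<Rightarrow> real) \<Rightarrow> real" where
  "l1norm F x = (\<Sum>i\<in>{1..F}. \<bar>x i\<bar>)"

definition frob :: "nat \<Rightarrow> (nat \<Rightarrow> nat \<Rightarrow> real) \<Rightarrow> real" where
  "frob F A = sqrt (\<Sum>i\<in>{1..F}. \<Sum>j\<in>{1..F}. (A i j)\<^sup>2)"

definition is_cover :: "nat \<Rightarrow> real \<Rightarrow> real \<Rightarrow> real \<Rightarrow> ((nat \<Rightarrow> real) \<times> (nat \<Rightarrow> real)) set \<Rightarrow> bool" where
  "is_cover F c r eps Ncov \<longleftrightarrow> finite Ncov \<and>
     (\<forall>(u, v)\<in>strat_set F c r. \<exists>(x, y)\<in>Ncov. l2dist F u x \<le> eps / 8 \<and> l2dist F v y \<le> eps / 8)"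

text \<open>Point estimator. rec j s w = the indicator v_j^{s-1} (recommendation in force
for slot s), d i s w = number of requests of file i in slot s.  With no
recommendation of j the quotient is 0/0 = 0 in Isabelle.\<close>
definition phat :: "nat \<Rightarrow> nat \<Rightarrow> (nat \<Rightarrow> nat \<Rightarrow> 'w \<Rightarrow> nat) \<Rightarrow> (nat \<Rightarrow> nat \<Rightarrow> 'w \<Rightarrow> bool) \<Rightarrow> 'w \<Rightarrow> nat \<Rightarrow> nat \<Rightarrow> real" where
  "phat N t d rec w i j =
     (\<Sum>s<t. real (d i s w) * of_bool (rec j s w)) / (real N * (\<Sum>s<t. of_bool (rec j s w)))"

end

theory Submission
  imports Defs
begin

text \<open>
  Tilting the masked sum \<open>\<Sum>\<^sub>s v\<^sub>s (X\<^sub>s - N (p \<plusminus> \<eta>))\<close> by \<open>\<plusminus>4\<eta>\<close>, the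
  independence of the slots and Hoeffding's lemma for the binomial factor bound the probability
  of a deviation larger than \<open>\<eta> = \<epsilon> / (4 \<kappa> F c r)\<close> by \<open>2 (1 - q + q exp (-2 N \<eta>\<^sup>2)) ^ t\<close>.
  A slot without recommendation contributes the factor \<open>1 - q\<close>; this also pays for the junk
  value \<open>0 / 0 = 0\<close> of the estimate when \<open>j\<close> was never recommended. Since
  \<open>1 - x \<le> exp (-x)\<close>, the lower bound on \<open>t\<close> makes the union of these \<open>F\<^sup>2\<close> events have
  probability at most \<open>\<delta>\<close>. Outside it the \<open>\<kappa>\<close>-inequality bounds \<open>\<bar>u\<^sup>T (phat - P) v\<bar>\<close> by
  \<open>\<kappa> c r F \<eta> = \<epsilon> / 4\<close> on the whole strategy set, so the maximiser of the estimated hit loses at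
  most \<open>\<epsilon> / 2\<close> against the true supremum. The cover only enters through \<open>card Ncov \<ge> 1\<close>,
  and of the independence hypotheses only the one for the pairs \<open>(rec j s, X i j s)\<close> is used.
\<close>

lemma bernoulli_mgf_le:
  fixes p l :: real
  assumes "0 \<le> p" "p \<le> 1"
  shows "1 - p + p * exp l \<le> exp (l\<^sup>2 / 8 + l * p)"
proof -
  have nonneg_tilt: "1 - p + p * exp h \<le> exp (h\<^sup>2 / 8 + h * p)" if "0 \<le> h" "0 \<le> p" "p \<le> 1" for h p :: real
  proof -
    have pos: "0 < 1 + p * (exp h - 1)"
      using that by (intro add_pos_nonneg mult_nonneg_nonneg) auto
    have "ln (1 + p * (exp h - 1)) \<le> h\<^sup>2 / 8 + h * p"
      using Hoeffdings_lemma_aux[of h p] that by simp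
    hence "1 + p * (exp h - 1) \<le> exp (h\<^sup>2 / 8 + h * p)"
      using pos by (metis exp_le_cancel_iff exp_ln)
    thus ?thesis by (simp add: algebra_simps)
  qed
  show ?thesis
  proof (cases "0 \<le> l")
    case True
    with nonneg_tilt assms show ?thesis by blast
  next
    case False
    have "1 - (1 - p) + (1 - p) * exp (- l) \<le> exp ((- l)\<^sup>2 / 8 + (- l) * (1 - p))"
      by (rule nonneg_tilt) (use False assms in auto)
    hence "exp l * (1 - (1 - p) + (1 - p) * exp (- l)) \<le> exp l * exp ((- l)\<^sup>2 / 8 + (- l) * (1 - p))"
      by (intro mult_left_mono) auto
    also have "exp l * exp ((- l)\<^sup>2 / 8 + (- l) * (1 - p)) = exp (l\<^sup>2 / 8 + l * p)"
      by (simp add: exp_add[symmetric] algebra_simps)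
    also have "exp l * (1 - (1 - p) + (1 - p) * exp (- l)) = 1 - p + p * exp l"
      by (simp add: algebra_simps exp_minus_inverse)
    finally show ?thesis .
  qed
qed

lemma nn_integral_binomial_pmf_exp:
  assumes "p \<in> {0..1}"
  shows "(\<integral>\<^sup>+y. ennreal (exp (l * real y)) \<partial>measure_pmf (binomial_pmf N p))
       = ennreal ((1 - p + p * exp l) ^ N)"
proof -
  have "(\<integral>\<^sup>+y. ennreal (exp (l * real y)) \<partial>measure_pmf (binomial_pmf N p))
      = ennreal (\<Sum>k\<le>N. (real (N choose k) * p ^ k * (1 - p) ^ (N - k)) * exp (l * real k))"
    using assms by (simp add: nn_integral_eq_integral expectation_binomial_pmf')
  also have "(\<Sum>k\<le>N. (real (N choose k) * p ^ k * (1 - p) ^ (N - k)) * exp (l * real k))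
      = (\<Sum>k\<le>N. real (N choose k) * (p * exp l) ^ k * (1 - p) ^ (N - k))"
    by (simp add: power_mult_distrib exp_of_nat_mult[symmetric] algebra_simps)
  also have "\<dots> = (1 - p + p * exp l) ^ N"
    using binomial_ring[of "p * exp l" "1 - p" N] by (simp add: algebra_simps)
  finally show ?thesis .
qed

lemma nn_integral_binomial_pmf_exp_centered_le:
  assumes "p \<in> {0..1}"
  shows "(\<integral>\<^sup>+y. ennreal (exp (l * (real y - real N * p) + c)) \<partial>measure_pmf (binomial_pmf N p))
       \<le> ennreal (exp (real N * l\<^sup>2 / 8 + c))"
proof -
  have "(\<integral>\<^sup>+y. ennreal (exp (l * (real y - real N * p) + c)) \<partial>measure_pmf (binomial_pmf N p))
      = (\<integral>\<^sup>+y. ennreal (exp (l * real y)) * ennreal (exp (c - l * real N * p)) \<partial>measure_pmf (binomial_pmf N p))"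
    by (intro nn_integral_cong) (simp add: ennreal_mult'[symmetric] exp_add[symmetric] algebra_simps)
  also have "\<dots> = ennreal ((1 - p + p * exp l) ^ N * exp (c - l * real N * p))"
    using assms by (simp add: nn_integral_multc nn_integral_binomial_pmf_exp ennreal_mult')
  also have "\<dots> \<le> ennreal (exp (real N * l\<^sup>2 / 8 + c))"
  proof (rule ennreal_leI)
    have "(1 - p + p * exp l) ^ N \<le> exp (l\<^sup>2 / 8 + l * p) ^ N"
      using assms by (intro power_mono bernoulli_mgf_le) (auto intro: add_nonneg_nonneg)
    then have "(1 - p + p * exp l) ^ N * exp (c - l * real N * p)
        \<le> exp (l\<^sup>2 / 8 + l * p) ^ N * exp (c - l * real N * p)"
      by (rule mult_right_mono) simp
    also have "\<dots> = exp (real N * l\<^sup>2 / 8 + c)"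
      by (simp add: exp_of_nat_mult[symmetric] exp_add[symmetric] algebra_simps)
    finally show "(1 - p + p * exp l) ^ N * exp (c - l * real N * p) \<le> exp (real N * l\<^sup>2 / 8 + c)" .
  qed
  finally show ?thesis .
qed

lemma nn_integral_binomial_pmf_tilt_le:
  assumes "p \<in> {0..1}" "\<sigma> \<in> {1, -1}"
  shows "(\<integral>\<^sup>+y. ennreal (exp (\<sigma> * (4 * \<eta>) * (real y - real N * p) + - 4 * real N * \<eta>\<^sup>2))
           \<partial>measure_pmf (binomial_pmf N p))
       \<le> ennreal (exp (- 2 * real N * \<eta>\<^sup>2))"
proof -
  have "(\<integral>\<^sup>+y. ennreal (exp (\<sigma> * (4 * \<eta>) * (real y - real N * p) + - 4 * real N * \<eta>\<^sup>2))
          \<partial>measure_pmf (binomial_pmf N p))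
      \<le> ennreal (exp (real N * (\<sigma> * (4 * \<eta>))\<^sup>2 / 8 + - 4 * real N * \<eta>\<^sup>2))"
    using assms(1) by (rule nn_integral_binomial_pmf_exp_centered_le)
  also have "\<dots> = ennreal (exp (- 2 * real N * \<eta>\<^sup>2))"
    using assms(2) by (auto simp: power2_eq_square algebra_simps)
  finally show ?thesis .
qed

lemma (in prob_space) nn_integral_exp_masked:
  fixes B :: "'a \<Rightarrow> bool" and Y :: "'a \<Rightarrow> nat" and Z :: "'k \<Rightarrow> 'a \<Rightarrow> nat" and f :: "nat \<Rightarrow> real"
  assumes Bm: "B \<in> measurable M (count_space UNIV)"
    and indep: "indep_vars (\<lambda>_. count_space UNIV) Z {i, j}" and ij: "i \<noteq> j"
    and ZB: "Z i = (\<lambda>w. of_bool (B w))" and ZY: "Z j = Y"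
    and Bd: "distr M (count_space UNIV) B = measure_pmf (bernoulli_pmf q)"
    and q: "0 \<le> q" "q \<le> 1"
  shows "(\<integral>\<^sup>+w. ennreal (exp (of_bool (B w) * f (Y w))) \<partial>M)
       = ennreal (1 - q) + ennreal q * (\<integral>\<^sup>+w. ennreal (exp (f (Y w))) \<partial>M)"
proof -
  have Ym: "Y \<in> measurable M (count_space UNIV)"
    using indep ZY by (auto simp: indep_vars_def)
  have [measurable]: "Measurable.pred M B"
    using Bm by (simp add: pred_def)
  have [measurable]: "(\<lambda>w. g (Y w)) \<in> borel_measurable M" for g :: "nat \<Rightarrow> ennreal"
    by (rule measurable_compose[OF Ym]) simp
  have B_integral: "(\<integral>\<^sup>+w. g (B w) \<partial>M) = g True * ennreal q + g False * ennreal (1 - q)"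
    for g :: "bool \<Rightarrow> ennreal"
  proof -
    have "(\<integral>\<^sup>+w. g (B w) \<partial>M) = (\<integral>\<^sup>+b. g b \<partial>distr M (count_space UNIV) B)"
      by (rule nn_integral_distr[symmetric]) (use Bm in auto)
    also have "\<dots> = g True * ennreal q + g False * ennreal (1 - q)"
      using Bd q by simp
    finally show ?thesis .
  qed
  define W where "W k = (if k = i then (\<lambda>n. ennreal (real n)) else (\<lambda>n. ennreal (exp (f n))))" for k
  have "indep_vars (\<lambda>_. borel) (\<lambda>k w. W k (Z k w)) {i, j}"
    by (rule indep_vars_compose2[OF indep]) (simp add: W_def)
  from indep_vars_nn_integral[OF _ this]
  have product: "(\<integral>\<^sup>+w. ennreal (of_bool (B w)) * ennreal (exp (f (Y w))) \<partial>M)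
      = (\<integral>\<^sup>+w. ennreal (of_bool (B w)) \<partial>M) * (\<integral>\<^sup>+w. ennreal (exp (f (Y w))) \<partial>M)"
    using ij by (simp add: W_def ZB ZY)
  have "(\<integral>\<^sup>+w. ennreal (exp (of_bool (B w) * f (Y w))) \<partial>M)
      = (\<integral>\<^sup>+w. ennreal (1 - of_bool (B w)) + ennreal (of_bool (B w)) * ennreal (exp (f (Y w))) \<partial>M)"
    by (intro nn_integral_cong) auto
  also have "\<dots> = (\<integral>\<^sup>+w. ennreal (1 - of_bool (B w)) \<partial>M)
      + (\<integral>\<^sup>+w. ennreal (of_bool (B w)) * ennreal (exp (f (Y w))) \<partial>M)"
    by (intro nn_integral_add) auto
  also have "\<dots> = ennreal (1 - q) + ennreal q * (\<integral>\<^sup>+w. ennreal (exp (f (Y w))) \<partial>M)"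
    unfolding product using B_integral[of "\<lambda>b. ennreal (1 - of_bool b)"] B_integral[of "\<lambda>b. ennreal (of_bool b)"]
    by simp
  finally show ?thesis .
qed

lemma (in prob_space) indep_vars_compose_pairs:
  fixes Z :: "'i + 'i \<Rightarrow> 'a \<Rightarrow> nat" and G :: "nat \<Rightarrow> nat \<Rightarrow> 'b::topological_space"
  assumes indep: "indep_vars (\<lambda>_. count_space UNIV) Z (Inl ` T \<union> Inr ` T)"
  shows "indep_vars (\<lambda>_. borel) (\<lambda>s w. G (Z (Inl s) w) (Z (Inr s) w)) T"
proof -
  have "indep_vars (\<lambda>s. PiM {Inl s, Inr s} (\<lambda>_. count_space UNIV))
      (\<lambda>s w. restrict (\<lambda>z. Z z w) {Inl s, Inr s}) T"
    using indep_vars_restrict[OF indep, of T "\<lambda>s. {Inl s, Inr s}"]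
    by (auto simp: disjoint_family_on_def)
  then have "indep_vars (\<lambda>_. borel)
      (\<lambda>s w. (\<lambda>h. G (h (Inl s)) (h (Inr s))) (restrict (\<lambda>z. Z z w) {Inl s, Inr s})) T"
    by (rule indep_vars_compose2) measurable
  then show ?thesis
    by simp
qed

lemma (in prob_space) prob_masked_sum_nonneg_le:
  fixes B :: "'i \<Rightarrow> 'a \<Rightarrow> bool" and Y :: "'i \<Rightarrow> 'a \<Rightarrow> nat" and f :: "nat \<Rightarrow> real"
  assumes T: "finite T"
    and Bm: "\<And>s. B s \<in> measurable M (count_space UNIV)"
    and Ym: "\<And>s. Y s \<in> measurable M (count_space UNIV)"
    and indep: "indep_vars (\<lambda>_. count_space UNIV)
        (\<lambda>z. case z of Inl s \<Rightarrow> (\<lambda>w. of_bool (B s w) :: nat) | Inr s \<Rightarrow> Y s) (Inl ` T \<union> Inr ` T)"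
    and Bd: "\<And>s. s \<in> T \<Longrightarrow> distr M (count_space UNIV) (B s) = measure_pmf (bernoulli_pmf q)"
    and Yd: "\<And>s. s \<in> T \<Longrightarrow> (\<integral>\<^sup>+w. ennreal (exp (f (Y s w))) \<partial>M) \<le> ennreal m"
    and q: "0 \<le> q" "q \<le> 1" and m: "0 \<le> m"
  shows "prob {w \<in> space M. 0 \<le> (\<Sum>s\<in>T. of_bool (B s w) * f (Y s w))} \<le> (1 - q + q * m) ^ card T"
proof -
  define Z where "Z = (\<lambda>z. case z of Inl s \<Rightarrow> (\<lambda>w. of_bool (B s w) :: nat) | Inr s \<Rightarrow> Y s)"
  have indep_slots: "indep_vars (\<lambda>_. borel) (\<lambda>s w. ennreal (exp (of_bool (B s w) * f (Y s w)))) T"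
    using indep_vars_compose_pairs[OF indep, of "\<lambda>b y. ennreal (exp (real b * f y))"]
    by (rule indep_vars_cong[THEN iffD1, rotated 3]) auto
  have [measurable]: "Measurable.pred M (B s)" "Y s \<in> M \<rightarrow>\<^sub>M count_space UNIV" for s
    using Bm Ym by (auto simp: pred_def)
  have "emeasure M {w \<in> space M. 0 \<le> (\<Sum>s\<in>T. of_bool (B s w) * f (Y s w))}
      \<le> ennreal (exp (-1 * 0)) * (\<integral>\<^sup>+w. ennreal (exp (1 * (\<Sum>s\<in>T. of_bool (B s w) * f (Y s w))))
           * indicator (space M) w \<partial>M)"
    by (rule Chernoff_ineq_nn_integral_ge) auto
  also have "\<dots> = (\<integral>\<^sup>+w. ennreal (exp (\<Sum>s\<in>T. of_bool (B s w) * f (Y s w))) * indicator (space M) w \<partial>M)"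
    by simp
  also have "\<dots> = (\<integral>\<^sup>+w. (\<Prod>s\<in>T. ennreal (exp (of_bool (B s w) * f (Y s w)))) \<partial>M)"
    by (intro nn_integral_cong, unfold exp_sum[OF T], subst prod_ennreal) auto
  also have "\<dots> = (\<Prod>s\<in>T. \<integral>\<^sup>+w. ennreal (exp (of_bool (B s w) * f (Y s w))) \<partial>M)"
    by (rule indep_vars_nn_integral[OF T indep_slots]) simp
  also have "\<dots> \<le> (\<Prod>s\<in>T. ennreal (1 - q + q * m))"
  proof (rule prod_mono_ennreal)
    fix s assume s: "s \<in> T"
    have "indep_vars (\<lambda>_. count_space UNIV) Z {Inl s, Inr s}"
      by (rule indep_vars_subset[OF indep[folded Z_def]]) (use s in auto)
    then have "(\<integral>\<^sup>+w. ennreal (exp (of_bool (B s w) * f (Y s w))) \<partial>M)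
        = ennreal (1 - q) + ennreal q * (\<integral>\<^sup>+w. ennreal (exp (f (Y s w))) \<partial>M)"
      by (rule nn_integral_exp_masked[OF Bm _ _ _ _ Bd[OF s] q]) (auto simp: Z_def)
    also have "\<dots> \<le> ennreal (1 - q) + ennreal q * ennreal m"
      by (intro add_left_mono mult_left_mono Yd s) auto
    also have "\<dots> = ennreal (1 - q + q * m)"
      using q m by (simp add: ennreal_mult ennreal_plus)
    finally show "(\<integral>\<^sup>+w. ennreal (exp (of_bool (B s w) * f (Y s w))) \<partial>M) \<le> ennreal (1 - q + q * m)" .
  qed
  also have "\<dots> = ennreal ((1 - q + q * m) ^ card T)"
    using q m by (simp only: prod_constant) (rule ennreal_power, simp)
  finally show ?thesis
    using q m by (simp add: emeasure_eq_measure)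
qed

text \<open>For \<open>D = 0\<close> the hypothesis can hold (then \<open>S / D = 0\<close>), and so does the conclusion.\<close>
lemma ratio_deviation_cases:
  fixes S D p \<eta> :: real
  assumes "0 \<le> D" "\<eta> < \<bar>S / D - p\<bar>"
  shows "0 \<le> (S - p * D) - \<eta> * D \<or> 0 \<le> - (S - p * D) - \<eta> * D"
proof -
  have "\<eta> * D \<le> \<bar>S - p * D\<bar>"
  proof (cases "D = 0")
    case False
    with assms(1) have D: "0 < D" by simp
    have "S / D - p = (S - p * D) / D"
      using D by (simp add: diff_divide_distrib)
    with assms(2) have "\<eta> < \<bar>S - p * D\<bar> / D"
      using D by simp
    then show ?thesis
      using D by (simp add: pos_less_divide_eq)
  qed simp
  then show ?thesis
    by (cases "0 \<le> S - p * D") simp_all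
qed

lemma tilted_masked_sum_nonneg_if_deviation:
  fixes B :: "nat \<Rightarrow> bool" and y :: "nat \<Rightarrow> nat" and p \<eta> :: real
  assumes \<eta>: "0 < \<eta>"
    and dev: "\<eta> < \<bar>(\<Sum>s<t. real (y s) * of_bool (B s)) / (real N * (\<Sum>s<t. of_bool (B s))) - p\<bar>"
  shows "\<exists>\<sigma>\<in>{1, -1}.
           0 \<le> (\<Sum>s\<in>{..<t}. of_bool (B s) * (\<sigma> * (4 * \<eta>) * (real (y s) - real N * p) + - 4 * real N * \<eta>\<^sup>2))"
proof -
  define b where "b s = (of_bool (B s) :: real)" for s
  define S where "S = (\<Sum>s<t. real (y s) * b s)"
  define D where "D = real N * (\<Sum>s<t. b s)"
  have tilted_sum: "(\<Sum>s\<in>{..<t}. of_bool (B s) * (\<sigma> * (4 * \<eta>) * (real (y s) - real N * p) + - 4 * real N * \<eta>\<^sup>2))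
      = 4 * \<eta> * (\<sigma> * (S - p * D) - \<eta> * D)" for \<sigma>
  proof -
    have "(\<Sum>s\<in>{..<t}. of_bool (B s) * (\<sigma> * (4 * \<eta>) * (real (y s) - real N * p) + - 4 * real N * \<eta>\<^sup>2))
        = (\<Sum>s<t. 4 * \<eta> * \<sigma> * (real (y s) * b s) - 4 * \<eta> * (\<sigma> * p + \<eta>) * real N * b s)"
      by (intro sum.cong) (simp_all add: b_def power2_eq_square algebra_simps)
    also have "\<dots> = 4 * \<eta> * \<sigma> * S - 4 * \<eta> * (\<sigma> * p + \<eta>) * real N * (\<Sum>s<t. b s)"
      unfolding S_def by (simp only: sum_subtractf sum_distrib_left)
    also have "\<dots> = 4 * \<eta> * (\<sigma> * (S - p * D) - \<eta> * D)"
      by (simp add: D_def algebra_simps)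
    finally show ?thesis .
  qed
  have "0 \<le> (S - p * D) - \<eta> * D \<or> 0 \<le> - (S - p * D) - \<eta> * D"
  proof (rule ratio_deviation_cases)
    show "0 \<le> D" unfolding D_def b_def by (simp add: sum_nonneg)
    show "\<eta> < \<bar>S / D - p\<bar>" using dev by (simp only: S_def D_def b_def)
  qed
  then have "\<exists>\<sigma>\<in>{1, -1}. 0 \<le> 4 * \<eta> * (\<sigma> * (S - p * D) - \<eta> * D)"
    using \<eta> by auto
  then show ?thesis
    by (simp only: tilted_sum)
qed

lemma (in prob_space) prob_estimate_deviation_le:
  fixes B :: "nat \<Rightarrow> 'a \<Rightarrow> bool" and Y :: "nat \<Rightarrow> 'a \<Rightarrow> nat" and p q \<eta> :: real
  assumes Bm: "\<And>s. B s \<in> measurable M (count_space UNIV)"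
    and Ym: "\<And>s. Y s \<in> measurable M (count_space UNIV)"
    and indep: "indep_vars (\<lambda>_. count_space UNIV)
        (\<lambda>z. case z of Inl s \<Rightarrow> (\<lambda>w. of_bool (B s w) :: nat) | Inr s \<Rightarrow> Y s) (Inl ` {..<t} \<union> Inr ` {..<t})"
    and Bd: "\<And>s. s < t \<Longrightarrow> distr M (count_space UNIV) (B s) = measure_pmf (bernoulli_pmf q)"
    and Yd: "\<And>s. s < t \<Longrightarrow> distr M (count_space UNIV) (Y s) = measure_pmf (binomial_pmf N p)"
    and p: "0 \<le> p" "p \<le> 1" and q: "0 \<le> q" "q \<le> 1" and \<eta>: "\<eta> > 0"
  shows "prob {w \<in> space M. \<eta> < \<bar>(\<Sum>s<t. real (Y s w) * of_bool (B s w))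
                                  / (real N * (\<Sum>s<t. of_bool (B s w))) - p\<bar>}
     \<le> 2 * (1 - q + q * exp (- 2 * real N * \<eta>\<^sup>2)) ^ t"
proof -
  define g where "g \<sigma> y = \<sigma> * (4 * \<eta>) * (real y - real N * p) + - 4 * real N * \<eta>\<^sup>2"
    for \<sigma> :: real and y :: nat
  define U where "U \<sigma> = {w \<in> space M. 0 \<le> (\<Sum>s\<in>{..<t}. of_bool (B s w) * g \<sigma> (Y s w))}" for \<sigma>
  have [measurable]: "Measurable.pred M (B s)" "Y s \<in> M \<rightarrow>\<^sub>M count_space UNIV" for s
    using Bm Ym by (auto simp: pred_def)
  have U_sets: "U \<sigma> \<in> sets M" for \<sigma>
    unfolding U_def by measurable
  have U_le: "prob (U \<sigma>) \<le> (1 - q + q * exp (- 2 * real N * \<eta>\<^sup>2)) ^ t" if "\<sigma> \<in> {1, -1}" for \<sigma>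
  proof -
    have "(\<integral>\<^sup>+w. ennreal (exp (g \<sigma> (Y s w))) \<partial>M) \<le> ennreal (exp (- 2 * real N * \<eta>\<^sup>2))" if "s < t" for s
    proof -
      have "(\<integral>\<^sup>+w. ennreal (exp (g \<sigma> (Y s w))) \<partial>M)
          = (\<integral>\<^sup>+y. ennreal (exp (g \<sigma> y)) \<partial>distr M (count_space UNIV) (Y s))"
        by (rule nn_integral_distr[symmetric]) (use Ym in auto)
      also have "\<dots> \<le> ennreal (exp (- 2 * real N * \<eta>\<^sup>2))"
        unfolding Yd[OF that] g_def using p \<open>\<sigma> \<in> {1, -1}\<close> by (intro nn_integral_binomial_pmf_tilt_le) auto
      finally show ?thesis .
    qed
    then show ?thesis
      unfolding U_def using prob_masked_sum_nonneg_le[OF _ Bm Ym indep Bd _ q] by simp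
  qed
  have "{w \<in> space M. \<eta> < \<bar>(\<Sum>s<t. real (Y s w) * of_bool (B s w))
                          / (real N * (\<Sum>s<t. of_bool (B s w))) - p\<bar>} \<subseteq> U 1 \<union> U (-1)"
  proof safe
    fix w assume "w \<in> space M" "w \<notin> U (-1)"
      and "\<eta> < \<bar>(\<Sum>s<t. real (Y s w) * of_bool (B s w)) / (real N * (\<Sum>s<t. of_bool (B s w))) - p\<bar>"
    with tilted_masked_sum_nonneg_if_deviation[OF \<eta>, where B = "\<lambda>s. B s w" and y = "\<lambda>s. Y s w"]
    show "w \<in> U 1"
      unfolding U_def g_def by blast
  qed
  then have "prob {w \<in> space M. \<eta> < \<bar>(\<Sum>s<t. real (Y s w) * of_bool (B s w))
                                     / (real N * (\<Sum>s<t. of_bool (B s w))) - p\<bar>} \<le> prob (U 1 \<union> U (-1))"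
    by (rule finite_measure_mono) (use U_sets in auto)
  also have "\<dots> \<le> prob (U 1) + prob (U (-1))"
    by (rule measure_Un_le) (rule U_sets)+
  finally show ?thesis using U_le[of 1] U_le[of "-1"] by simp
qed

lemma (in prob_space) prob_Diff_null_UN_ge:
  fixes b :: real
  assumes "N0 \<in> null_sets M" "finite I"
    and "\<And>i. E i \<in> sets M" "\<And>i. i \<in> I \<Longrightarrow> prob (E i) \<le> b"
  shows "prob (space M - (N0 \<union> (\<Union>i\<in>I. E i))) \<ge> 1 - real (card I) * b"
proof -
  have union_sets: "N0 \<union> (\<Union>i\<in>I. E i) \<in> sets M"
    using null_setsD2[OF assms(1)] assms(2,3) by (intro sets.Un sets.finite_UN) auto
  have "prob (N0 \<union> (\<Union>i\<in>I. E i)) \<le> prob N0 + prob (\<Union>i\<in>I. E i)"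
    using assms by (intro measure_Un_le) auto
  also have "\<dots> \<le> (\<Sum>i\<in>I. prob (E i))"
    using assms measure_UNION_le[of I E] by (simp add: null_setsD1 measure_def)
  also have "\<dots> \<le> real (card I) * b"
    using sum_mono[of I "\<lambda>i. prob (E i)" "\<lambda>_. b"] assms(4) by simp
  finally show ?thesis
    using prob_compl[OF union_sets] by linarith
qed

lemma (in prob_space) phat_close_with_high_prob:
  fixes rec :: "nat \<Rightarrow> nat \<Rightarrow> 'a \<Rightarrow> bool" and d :: "nat \<Rightarrow> nat \<Rightarrow> 'a \<Rightarrow> nat"
    and X :: "nat \<Rightarrow> nat \<Rightarrow> nat \<Rightarrow> 'a \<Rightarrow> nat" and P :: "nat \<Rightarrow> nat \<Rightarrow> real" and q \<eta> :: real
  assumes rec_meas: "\<forall>j s. rec j s \<in> measurable M (count_space UNIV)"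
    and rec_distr: "\<forall>j\<in>{1..F}. \<forall>s<t. distr M (count_space UNIV) (rec j s) = measure_pmf (bernoulli_pmf q)"
    and X_meas: "\<forall>i j s. X i j s \<in> measurable M (count_space UNIV)"
    and X_distr: "\<forall>i\<in>{1..F}. \<forall>j\<in>{1..F}. \<forall>s<t.
        distr M (count_space UNIV) (X i j s) = measure_pmf (binomial_pmf N (P i j))"
    and X_indep: "\<forall>i\<in>{1..F}. \<forall>j\<in>{1..F}.
        indep_vars (\<lambda>_. count_space UNIV)
          (\<lambda>z. case z of Inl s \<Rightarrow> (\<lambda>w. of_bool (rec j s w) :: nat) | Inr s \<Rightarrow> X i j s)
          (Inl ` {..<t} \<union> Inr ` {..<t})"
    and d_X: "\<forall>i\<in>{1..F}. \<forall>j\<in>{1..F}. \<forall>s<t. AE w in M. rec j s w \<longrightarrow> d i s w = X i j s w"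
    and P01: "\<forall>i\<in>{1..F}. \<forall>j\<in>{1..F}. 0 \<le> P i j \<and> P i j \<le> 1"
    and q: "0 \<le> q" "q \<le> 1" and \<eta>: "0 < \<eta>"
  shows "\<exists>A\<in>sets M. A \<subseteq> {w \<in> space M. \<forall>i\<in>{1..F}. \<forall>j\<in>{1..F}. \<bar>phat N t d rec w i j - P i j\<bar> \<le> \<eta>}
           \<and> prob A \<ge> 1 - real F ^ 2 * (2 * (1 - q + q * exp (- 2 * real N * \<eta>\<^sup>2)) ^ t)"
proof -
  define I where "I = {1..F} \<times> {1..F}"
  define E where "E = (\<lambda>(i, j). {w \<in> space M. \<eta> < \<bar>(\<Sum>s<t. real (X i j s w) * of_bool (rec j s w))
                                         / (real N * (\<Sum>s<t. of_bool (rec j s w))) - P i j\<bar>})"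
  have [measurable]: "Measurable.pred M (rec j s)" "X i j s \<in> M \<rightarrow>\<^sub>M count_space UNIV" for i j s
    using rec_meas X_meas by (auto simp: pred_def)
  have E_sets: "E ij \<in> sets M" for ij
    unfolding E_def by (cases ij) (simp only: prod.case, measurable)
  have E_le: "prob (E ij) \<le> 2 * (1 - q + q * exp (- 2 * real N * \<eta>\<^sup>2)) ^ t" if ij_in: "ij \<in> I" for ij
  proof -
    obtain i j where ij: "ij = (i, j)" "i \<in> {1..F}" "j \<in> {1..F}"
      using ij_in unfolding I_def by blast
    show ?thesis
      unfolding ij(1) E_def prod.case
      by (rule prob_estimate_deviation_le) (use rec_meas X_meas rec_distr X_distr X_indep P01 q \<eta> ij in auto)
  qed
  have "AE w in M. \<forall>i\<in>{1..F}. \<forall>j\<in>{1..F}. \<forall>s\<in>{..<t}. rec j s w \<longrightarrow> d i s w = X i j s w"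
    using d_X by (intro eventually_ball_finite ballI) auto
  then obtain N0 where N0: "N0 \<in> null_sets M"
    "{w \<in> space M. \<not> (\<forall>i\<in>{1..F}. \<forall>j\<in>{1..F}. \<forall>s\<in>{..<t}. rec j s w \<longrightarrow> d i s w = X i j s w)} \<subseteq> N0"
    by (auto elim!: AE_E simp: null_sets_def)
  define A where "A = space M - (N0 \<union> (\<Union>ij\<in>I. E ij))"
  have "A \<subseteq> {w \<in> space M. \<forall>i\<in>{1..F}. \<forall>j\<in>{1..F}. \<bar>phat N t d rec w i j - P i j\<bar> \<le> \<eta>}"
  proof safe
    fix w i j assume w: "w \<in> A" and ij: "i \<in> {1..F}" "j \<in> {1..F}"
    have "\<forall>i\<in>{1..F}. \<forall>j\<in>{1..F}. \<forall>s\<in>{..<t}. rec j s w \<longrightarrow> d i s w = X i j s w"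
      using N0(2) w unfolding A_def by blast
    then have "(\<Sum>s<t. real (d i s w) * of_bool (rec j s w)) = (\<Sum>s<t. real (X i j s w) * of_bool (rec j s w))"
      using ij by (intro sum.cong) auto
    moreover have "w \<notin> E (i, j)" "w \<in> space M"
      using w ij by (auto simp: A_def I_def)
    ultimately show "\<bar>phat N t d rec w i j - P i j\<bar> \<le> \<eta>"
      by (simp add: E_def phat_def)
  qed (simp add: A_def)
  moreover have "A \<in> sets M"
    unfolding A_def using null_setsD2[OF N0(1)] E_sets
    by (intro sets.Diff sets.Un sets.finite_UN) (auto simp: I_def)
  moreover have "prob A \<ge> 1 - real F ^ 2 * (2 * (1 - q + q * exp (- 2 * real N * \<eta>\<^sup>2)) ^ t)"
  proof -
    have "finite I" "real (card I) = real F ^ 2"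
      by (simp_all add: I_def power2_eq_square)
    with prob_Diff_null_UN_ge[where I = I and E = E, OF N0(1) _ E_sets E_le] show ?thesis
      unfolding A_def by simp
  qed
  ultimately show ?thesis by blast
qed

lemma l1norm_nonneg: "0 \<le> l1norm F x"
  unfolding l1norm_def by (simp add: sum_nonneg)

lemma frob_nonneg: "0 \<le> frob F A"
  unfolding frob_def by (simp add: sum_nonneg)

lemma strat_set_l1norm_le:
  assumes "(u, v) \<in> strat_set F c r"
  shows "l1norm F u \<le> c" "l1norm F v \<le> r"
  using assms by (auto simp: strat_set_def l1norm_def)

lemma bilin_diff: "bilin F u Q v - bilin F u P v = bilin F u (\<lambda>i j. Q i j - P i j) v"
  unfolding bilin_def by (simp add: sum_subtractf[symmetric] algebra_simps)

lemma frob_le: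
  assumes "\<forall>i\<in>{1..F}. \<forall>j\<in>{1..F}. \<bar>A i j\<bar> \<le> \<eta>" "0 \<le> \<eta>"
  shows "frob F A \<le> real F * \<eta>"
proof -
  have "frob F A \<le> sqrt (\<Sum>i\<in>{1..F}. \<Sum>j\<in>{1..F}. \<eta>\<^sup>2)"
    unfolding frob_def
  proof (intro real_sqrt_le_mono sum_mono)
    fix i j assume "i \<in> {1..F}" "j \<in> {1..F}"
    then have "\<bar>A i j\<bar>\<^sup>2 \<le> \<eta>\<^sup>2"
      using assms by (intro power_mono) auto
    then show "(A i j)\<^sup>2 \<le> \<eta>\<^sup>2" by simp
  qed
  also have "\<dots> = real F * \<eta>"
    using assms(2) by (simp add: real_sqrt_mult power2_eq_square)
  finally show ?thesis .
qed

lemma SUP_le_perturbed_maximizer: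
  fixes f g :: "'a \<Rightarrow> real"
  assumes "x \<in> S" "\<And>y. y \<in> S \<Longrightarrow> g y \<le> g x" "\<And>y. y \<in> S \<Longrightarrow> \<bar>f y - g y\<bar> \<le> e"
  shows "(SUP y\<in>S. f y) \<le> f x + 2 * e"
proof (rule cSUP_least)
  show "S \<noteq> {}" using assms(1) by blast
  fix y assume "y \<in> S"
  then show "f y \<le> f x + 2 * e"
    using assms(2)[of y] assms(3)[of y] assms(3)[OF assms(1)] by (simp add: abs_le_iff)
qed

lemma estimate_maximizer_near_optimal:
  fixes P Q :: "nat \<Rightarrow> nat \<Rightarrow> real"
  assumes kappa: "0 \<le> kappa" "\<forall>x y A. \<bar>bilin F x A y\<bar> \<le> kappa * l1norm F x * l1norm F y * frob F A"
    and close: "\<forall>i\<in>{1..F}. \<forall>j\<in>{1..F}. \<bar>Q i j - P i j\<bar> \<le> \<eta>" and \<eta>: "0 \<le> \<eta>"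
    and err: "2 * (kappa * c * r * (real F * \<eta>)) \<le> eps"
    and opt: "(u', v') \<in> strat_set F c r" "\<forall>(u, v)\<in>strat_set F c r. bilin F u Q v \<le> bilin F u' Q v'"
  shows "(SUP uv\<in>strat_set F c r. bilin F (fst uv) P (snd uv)) - eps \<le> bilin F u' P v'"
proof -
  have perturbation: "\<bar>bilin F u P v - bilin F u Q v\<bar> \<le> kappa * c * r * (real F * \<eta>)"
    if "(u, v) \<in> strat_set F c r" for u v
  proof -
    have "\<bar>bilin F u P v - bilin F u Q v\<bar> = \<bar>bilin F u (\<lambda>i j. Q i j - P i j) v\<bar>"
      by (simp only: bilin_diff[symmetric] abs_minus_commute)
    also have "\<dots> \<le> kappa * l1norm F u * l1norm F v * frob F (\<lambda>i j. Q i j - P i j)"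
      using kappa(2) by blast
    also have "\<dots> \<le> kappa * c * r * (real F * \<eta>)"
      using kappa(1) strat_set_l1norm_le[OF that] frob_le[OF close \<eta>]
        l1norm_nonneg[of F u] l1norm_nonneg[of F v] frob_nonneg[of F "\<lambda>i j. Q i j - P i j"]
      by (intro mult_mono mult_nonneg_nonneg) auto
    finally show ?thesis .
  qed
  have "(SUP uv\<in>strat_set F c r. bilin F (fst uv) P (snd uv))
      \<le> bilin F (fst (u', v')) P (snd (u', v')) + 2 * (kappa * c * r * (real F * \<eta>))"
    by (rule SUP_le_perturbed_maximizer[where g = "\<lambda>uv. bilin F (fst uv) Q (snd uv)"])
      (use opt perturbation in auto)
  with err show ?thesis by simp
qed

lemma card_cover_pos:
  assumes "0 \<le> c" "0 \<le> r" "is_cover F c r eps Ncov"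
  shows "0 < card Ncov"
proof -
  have "((\<lambda>_. 0), (\<lambda>_. 0)) \<in> strat_set F c r"
    using assms(1,2) by (simp add: strat_set_def)
  with assms(3) show ?thesis
    unfolding is_cover_def by (fastforce simp: card_gt_0_iff)
qed

lemma thinning_factor_power_le:
  fixes q e K \<delta> :: real
  assumes q: "0 < q" "q \<le> 1" and e: "0 \<le> e" "e < 1" and K: "0 < K" and \<delta>: "0 < \<delta>"
    and t: "real t \<ge> 1 / (q * (1 - e)) * ln (K / \<delta>)"
  shows "K * (1 - q + q * e) ^ t \<le> \<delta>"
proof -
  have "ln (K / \<delta>) \<le> real t * (q * (1 - e))"
    using t q e by (simp add: field_simps)
  have "0 \<le> 1 - q + q * e"
    using q e by (intro add_nonneg_nonneg mult_nonneg_nonneg) auto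
  then have "(1 - q + q * e) ^ t \<le> exp (- (q * (1 - e))) ^ t"
    using exp_ge_add_one_self[of "- (q * (1 - e))"] by (intro power_mono) (auto simp: algebra_simps)
  also have "\<dots> = exp (- (real t * (q * (1 - e))))"
    by (simp add: exp_of_nat_mult[symmetric])
  also have "\<dots> \<le> exp (- ln (K / \<delta>))"
    using \<open>ln (K / \<delta>) \<le> real t * (q * (1 - e))\<close> by simp
  also have "\<dots> = \<delta> / K"
    using K \<delta> by (simp add: exp_minus)
  finally show ?thesis
    using K by (simp add: field_simps)
qed

theorem theorem2:
  fixes M :: "'w measure"
    and F N t :: nat and c r eps delta kappa :: real
    and P :: "nat \<Rightarrow> nat \<Rightarrow> real"
    and rec :: "nat \<Rightarrow> nat \<Rightarrow> 'w \<Rightarrow> bool"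
    and d :: "nat \<Rightarrow> nat \<Rightarrow> 'w \<Rightarrow> nat"
    and X :: "nat \<Rightarrow> nat \<Rightarrow> nat \<Rightarrow> 'w \<Rightarrow> nat"
    and ustar vstar :: "'w \<Rightarrow> nat \<Rightarrow> real"
    and Ncov :: "((nat \<Rightarrow> real) \<times> (nat \<Rightarrow> real)) set"
  assumes M: "prob_space M"
    and F: "F \<ge> 1" and N: "N \<ge> 1"
    and cr: "c > 0" "r > 0" "r \<le> F"
    and P01: "\<forall>i\<in>{1..F}. \<forall>j\<in>{1..F}. 0 \<le> P i j \<and> P i j \<le> 1"
    and kappa: "kappa > 0"
      "\<forall>x y A. \<bar>bilin F x A y\<bar> \<le> kappa * l1norm F x * l1norm F y * frob F A"
    \<comment> \<open>recommendations: independent Bernoulli(q), q = r/F\<close>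
    and rec_meas: "\<forall>j s. rec j s \<in> measurable M (count_space UNIV)"
    and rec_distr: "\<forall>j\<in>{1..F}. \<forall>s<t.
        distr M (count_space UNIV) (rec j s) = measure_pmf (bernoulli_pmf (r / F))"
    and rec_indep: "prob_space.indep_vars M (\<lambda>_. count_space UNIV) (\<lambda>(j, s). rec j s) ({1..F} \<times> {..<t})"
    \<comment> \<open>requests: on slots where j is recommended, d i s is Binomial(N, P i j),
        independent across such slots and of the recommendation indicators of j\<close>
    and d_meas: "\<forall>i s. d i s \<in> measurable M (count_space UNIV)"
    and X_meas: "\<forall>i j s. X i j s \<in> measurable M (count_space UNIV)"
    and X_distr: "\<forall>i\<in>{1..F}. \<forall>j\<in>{1..F}. \<forall>s<t.
        distr M (count_space UNIV) (X i j s) = measure_pmf (binomial_pmf N (P i j))"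
    and X_indep: "\<forall>i\<in>{1..F}. \<forall>j\<in>{1..F}.
        prob_space.indep_vars M (\<lambda>_. count_space UNIV)
          (\<lambda>z. case z of Inl s \<Rightarrow> (\<lambda>w. of_bool (rec j s w) :: nat) | Inr s \<Rightarrow> X i j s)
          (Inl ` {..<t} \<union> Inr ` {..<t})"
    and d_X: "\<forall>i\<in>{1..F}. \<forall>j\<in>{1..F}. \<forall>s<t. AE w in M. rec j s w \<longrightarrow> d i s w = X i j s w"
    and opt: "\<forall>w\<in>space M. (ustar w, vstar w) \<in> strat_set F c r \<and>
        (\<forall>(u, v)\<in>strat_set F c r. bilin F u (phat N t d rec w) v
            \<le> bilin F (ustar w) (phat N t d rec w) (vstar w))"
    and eps: "eps > 0" and delta: "delta > 0"
    and cover: "is_cover F c r eps Ncov"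
    and t_large: "real t \<ge> 1 / ((r / F) * (1 - exp (- (N * eps\<^sup>2) / (8 * kappa\<^sup>2 * F\<^sup>2 * c\<^sup>2 * r\<^sup>2))))
        * ln (2 * card Ncov * F\<^sup>2 / delta)"
  shows "\<exists>A\<in>sets M. A \<subseteq> {w\<in>space M. bilin F (ustar w) P (vstar w)
            \<ge> (SUP uv\<in>strat_set F c r. bilin F (fst uv) P (snd uv)) - eps}
          \<and> measure M A \<ge> 1 - delta"
proof -
  interpret prob_space M by (rule M)
  define q where "q = r / real F"
  define \<eta> where "\<eta> = eps / (4 * kappa * real F * c * r)"
  define \<beta> where "\<beta> = 1 - q + q * exp (- 2 * real N * \<eta>\<^sup>2)"
  have q: "0 < q" "q \<le> 1" and \<eta>: "0 < \<eta>" and err: "2 * (kappa * c * r * (real F * \<eta>)) \<le> eps"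
    using F cr eps kappa by (auto simp: q_def \<eta>_def field_simps)
  have exponent: "- (N * eps\<^sup>2) / (8 * kappa\<^sup>2 * F\<^sup>2 * c\<^sup>2 * r\<^sup>2) = - 2 * real N * \<eta>\<^sup>2"
    unfolding \<eta>_def using kappa cr F by (simp add: field_simps power2_eq_square)
  have card_Ncov: "1 \<le> real (card Ncov)"
    using card_cover_pos[OF _ _ cover] cr by simp
  have "2 * card Ncov * F\<^sup>2 * \<beta> ^ t \<le> delta"
    unfolding \<beta>_def using q \<eta> N F delta card_Ncov t_large[unfolded exponent q_def[symmetric]]
    by (intro thinning_factor_power_le) auto
  moreover have "1 * (real F ^ 2 * (2 * \<beta> ^ t)) \<le> card Ncov * (real F ^ 2 * (2 * \<beta> ^ t))"
    using q unfolding \<beta>_def by (intro mult_right_mono[OF card_Ncov]) simp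
  ultimately have tail: "real F ^ 2 * (2 * \<beta> ^ t) \<le> delta"
    by (simp add: algebra_simps)
  obtain A where A: "A \<in> sets M" "prob A \<ge> 1 - real F ^ 2 * (2 * \<beta> ^ t)"
    "A \<subseteq> {w \<in> space M. \<forall>i\<in>{1..F}. \<forall>j\<in>{1..F}. \<bar>phat N t d rec w i j - P i j\<bar> \<le> \<eta>}"
    using phat_close_with_high_prob[OF rec_meas rec_distr[folded q_def] X_meas X_distr X_indep d_X P01 _ _ \<eta>] q
    unfolding \<beta>_def by auto
  have "A \<subseteq> {w \<in> space M. bilin F (ustar w) P (vstar w)
      \<ge> (SUP uv\<in>strat_set F c r. bilin F (fst uv) P (snd uv)) - eps}"
    using A(3) opt
      estimate_maximizer_near_optimal[OF less_imp_le[OF kappa(1)] kappa(2) _ less_imp_le[OF \<eta>] err]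
    by blast
  moreover have "prob A \<ge> 1 - delta"
    using A(2) tail by linarith
  ultimately show ?thesis
    using A(1) by blast
qed

end
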